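(* Let $R_e\approx 1.4877$ be the unique positive root of $\frac{10}{7(R+1)}-\frac{R^2\sqrt{R}}{R^2+R+1}=0$. Define, for $x,y\ge 0$, $$d_0(x,y)=\frac{1+2x}{1+x}+\frac{xy}{1+y+xy},\quad d_1(x,y)=-\frac{x}{1+x}-\frac{xy}{1+y+xy}-\frac{xy^2}{1+y+xy}\frac{1+x}{1+y},\quad d_2(x,y)=\frac{xy^2}{1+y+xy}\frac{1+x}{1+y},$$ and, for $0<x,y,z<R_e$, $$d_*(x,y)=-\tfrac{10}{7}\sqrt{x}\,d_1(x,y)-\sqrt{xy}\,d_2(x,y),$$ $$p(x,y,z)=2d_0(y,z)-\sqrt{yz}\,d_2(y,z)-\tfrac{49}{100}d_*(y,z)-d_*(x,y),\qquad q(x,y,z)=d_*(y,z)-\sqrt{xy}\,d_2(x,y).$$ Let $\tau_k>0$ ($k\ge 1$) be time-step sizes with step ratios $r_k=\tau_k/\tau_{k-1}$ satisfying $0<r_k<R_e$ for all $k\ge 2$, and set $d^{(n)}_j=d_j(r_n,r_{n-1})$ for $j=0,1,2$. Then for every $n\ge 3$ and all real numbers $v_{n-2},v_{n-1},v_n$, $$2v_n\tau_n\big(d^{(n)}_0v_n+d^{(n)}_1v_{n-1}+d^{(n)}_2v_{n-2}\big)=G[v_n,v_{n-1}]-G[v_{n-1},v_{n-2}]+F[v_n,v_{n-1},v_{n-2}],$$ where $$G[v_n,v_{n-1}]=d_*(r_{n+1},r_n)\tau_nv_n^2+\sqrt{r_{n+1}r_n}\,d_2(r_{n+1},r_n)\big(\tfrac{7}{10}\sqrt{\tau_n}v_n-\sqrt{\tau_{n-1}}v_{n-1}\big)^2$$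 (and $G[v_{n-1},v_{n-2}]$ is the same expression with $n$ replaced by $n-1$), $$F[v_n,v_{n-1},v_{n-2}]=p(r_{n+1},r_n,r_{n-1})\tau_nv_n^2+q(r_{n+1},r_n,r_{n-1})\big(\tfrac{7}{10}\sqrt{\tau_n}v_n-\sqrt{\tau_{n-1}}v_{n-1}\big)^2+\sqrt{r_nr_{n-1}}\,d_2(r_n,r_{n-1})\big(\sqrt{\tau_n}v_n-\tfrac{7}{10}\sqrt{\tau_{n-1}}v_{n-1}+\sqrt{\tau_{n-2}}v_{n-2}\big)^2,$$ the functionals $G$ and $F$ are nonnegative, and $F[v_n,v_{n-1},v_{n-2}]\ge \frac{\tau_n}{50}v_n^2$.
   Context: The quantities $d^{(n)}_j$ are the variable-step BDF3 kernels: the BDF3 formula is $D_3v^n=\sum_{j=1}^n d^{(n)}_{n-j}\partial_\tau v^j$ with $\partial_\tau v^j=(v^j-v^{j-1})/\tau_j$, $d^{(n)}_j=d_j(r_n,r_{n-1})$ for $j=0,1,2$ and $d^{(n)}_j=0$ for $j\ge 3$. *)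

theory Defs
  imports Complex_Main
begin

definition Re_crit :: real where
  "Re_crit = (THE R. R > 0 \<and> 10 / (7 * (R + 1)) - R^2 * sqrt R / (R^2 + R + 1) = 0)"

definition d0 :: "real \<Rightarrow> real \<Rightarrow> real" where
  "d0 x y = (1 + 2*x) / (1 + x) + x*y / (1 + y + x*y)"

definition d1 :: "real \<Rightarrow> real \<Rightarrow> real" where
  "d1 x y = - x / (1 + x) - x*y / (1 + y + x*y) - x*y^2 / (1 + y + x*y) * ((1 + x) / (1 + y))"

definition d2 :: "real \<Rightarrow> real \<Rightarrow> real" where
  "d2 x y = x*y^2 / (1 + y + x*y) * ((1 + x) / (1 + y))"

definition dstar :: "real \<Rightarrow> real \<Rightarrow> real" where
  "dstar x y = - (10/7) * sqrt x * d1 x y - sqrt (x*y) * d2 x y"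

definition pfun :: "real \<Rightarrow> real \<Rightarrow> real \<Rightarrow> real" where
  "pfun x y z = 2 * d0 y z - sqrt (y*z) * d2 y z - (49/100) * dstar y z - dstar x y"

definition qfun :: "real \<Rightarrow> real \<Rightarrow> real \<Rightarrow> real" where
  "qfun x y z = dstar y z - sqrt (x*y) * d2 x y"

definition ratio :: "(nat \<Rightarrow> real) \<Rightarrow> nat \<Rightarrow> real" where
  "ratio tau k = tau k / tau (k - 1)"

definition Gfun :: "(nat \<Rightarrow> real) \<Rightarrow> nat \<Rightarrow> real \<Rightarrow> real \<Rightarrow> real" where
  "Gfun tau n a b =
     dstar (ratio tau (n+1)) (ratio tau n) * tau n * a^2
   + sqrt (ratio tau (n+1) * ratio tau n) * d2 (ratio tau (n+1)) (ratio tau n)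
       * ((7/10) * sqrt (tau n) * a - sqrt (tau (n-1)) * b)^2"

definition Ffun :: "(nat \<Rightarrow> real) \<Rightarrow> nat \<Rightarrow> real \<Rightarrow> real \<Rightarrow> real \<Rightarrow> real" where
  "Ffun tau n a b c =
     pfun (ratio tau (n+1)) (ratio tau n) (ratio tau (n-1)) * tau n * a^2
   + qfun (ratio tau (n+1)) (ratio tau n) (ratio tau (n-1))
       * ((7/10) * sqrt (tau n) * a - sqrt (tau (n-1)) * b)^2
   + sqrt (ratio tau n * ratio tau (n-1)) * d2 (ratio tau n) (ratio tau (n-1))
       * (sqrt (tau n) * a - (7/10) * sqrt (tau (n-1)) * b + sqrt (tau (n-2)) * c)^2"

end

theory Submission
  imports Defs
begin

(* The identity is pure algebra once tau_n = r_n r_(n-1) tau_(n-2) and all square roots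
   are expressed through sqrt r_n, sqrt r_(n-1) and sqrt tau_(n-2).
   With dA x = x/(1+x) and dB x y = xy/(1+y+xy) one has d0 = 1 + dA x + dB x y,
   d1 = -(dA x + dB x y + d2) and d_* x y = sqrt x (10/7 (dA x + dB x y) + d2 x y (10/7 - sqrt y)),
   which is nonnegative for sqrt y <= 10/7; hence G >= 0.
   For q, sqrt(xy) d2 x y = sqrt y dA y * sqrt x (1+x) dB x y, and the second factor is at most
   its value at x = y = max x y, which is below 10/7 exactly when max x y < R_e; together with
   d_* y z >= 10/7 sqrt y dA y this gives q >= 0.
   Finally p >= 1/50 is a finite computation: p is a combination of terms monotone in
   sqrt y and sqrt z, which yields a lower bound on boxes, checked on an adaptive bisection
   of [0, 11/9]^2. *)

definition dA :: "real \<Rightarrow> real" where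
  "dA x = x / (1 + x)"

definition dB :: "real \<Rightarrow> real \<Rightarrow> real" where
  "dB x y = x * y / (1 + y + x * y)"

lemma d0_eq: "0 \<le> x \<Longrightarrow> d0 x y = 1 + dA x + dB x y"
  unfolding d0_def dA_def dB_def by (simp add: field_simps)

lemma d1_eq: "d1 x y = - dA x - dB x y - d2 x y"
  unfolding d1_def d2_def dA_def dB_def by simp

lemma d2_eq: "d2 x y = dA y * (1 + x) * dB x y"
  unfolding d2_def dA_def dB_def by (simp add: power2_eq_square mult_ac)

lemma dA_nonneg: "0 \<le> x \<Longrightarrow> 0 \<le> dA x"
  unfolding dA_def by simp

lemma dB_nonneg: "0 \<le> x \<Longrightarrow> 0 \<le> y \<Longrightarrow> 0 \<le> dB x y"
  unfolding dB_def by simp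

lemma d2_nonneg: "0 \<le> x \<Longrightarrow> 0 \<le> y \<Longrightarrow> 0 \<le> d2 x y"
  unfolding d2_eq by (simp add: dA_nonneg dB_nonneg)

lemma dA_mono: "0 \<le> s \<Longrightarrow> s \<le> t \<Longrightarrow> dA s \<le> dA t"
  unfolding dA_def by (simp add: divide_simps algebra_simps)

lemma dB_mono:
  assumes "0 \<le> x" "x \<le> x'" "0 \<le> y" "y \<le> y'"
  shows "dB x y \<le> dB x' y'"
proof -
  have "x * y \<le> x' * y'"
    using assms by (intro mult_mono) auto
  moreover have "0 \<le> y * y' * (x' - x)"
    using assms by simp
  ultimately have "x * y * (1 + y' + x' * y') \<le> x' * y' * (1 + y + x * y)"
    by (simp add: algebra_simps)
  moreover have "0 < 1 + y + x * y" "0 < 1 + y' + x' * y'"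
    using assms by (auto intro: add_pos_nonneg)
  ultimately show ?thesis
    unfolding dB_def by (simp add: divide_simps)
qed

lemma d2_mono:
  assumes "0 \<le> x" "x \<le> x'" "0 \<le> y" "y \<le> y'"
  shows "d2 x y \<le> d2 x' y'"
  unfolding d2_eq using assms
  by (intro mult_mono dA_mono dB_mono) (auto simp: dA_nonneg dB_nonneg)

lemma dstar_eq:
  "0 \<le> x \<Longrightarrow> 0 \<le> y \<Longrightarrow>
   dstar x y = sqrt x * (10/7 * (dA x + dB x y) + d2 x y * (10/7 - sqrt y))"
  unfolding dstar_def d1_eq by (simp add: real_sqrt_mult field_simps)

lemma dstar_ge:
  assumes "0 \<le> x" "0 \<le> y" "sqrt y \<le> 10/7"
  shows "10/7 * sqrt x * dA x \<le> dstar x y"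
proof -
  have "0 \<le> sqrt x * (10/7 * dB x y + d2 x y * (10/7 - sqrt y))"
    using assms by (simp add: dB_nonneg d2_nonneg)
  moreover have "dstar x y = 10/7 * sqrt x * dA x + sqrt x * (10/7 * dB x y + d2 x y * (10/7 - sqrt y))"
    using assms by (simp add: dstar_eq algebra_simps)
  ultimately show ?thesis
    by linarith
qed

lemma dstar_nonneg:
  assumes "0 \<le> x" "0 \<le> y" "sqrt y \<le> 10/7"
  shows "0 \<le> dstar x y"
proof -
  have "0 \<le> 10/7 * sqrt x * dA x"
    using assms by (simp add: dA_nonneg)
  with dstar_ge[OF assms] show ?thesis
    by linarith
qed

(* The factor sqrt x * (1 + x) * dB x y of sqrt (x*y) * d2 x y, taken at x = y = R. *)
definition crit_fun :: "real \<Rightarrow> real" where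
  "crit_fun R = sqrt R * (1 + R) * dB R R"

lemma Re_crit_equation_iff:
  assumes "0 < R"
  shows "10 / (7 * (R + 1)) - R^2 * sqrt R / (R^2 + R + 1) = 0 \<longleftrightarrow> crit_fun R = 10/7"
proof -
  have "0 < R^2 + R + 1" "0 < R + 1"
    using assms by (intro add_pos_pos; simp)+
  then have "crit_fun R = R^2 * sqrt R / (R^2 + R + 1) * (R + 1)"
    unfolding crit_fun_def dB_def by (simp add: power2_eq_square field_simps)
  moreover have "10 / (7 * (R + 1)) - X = 0 \<longleftrightarrow> X * (R + 1) = 10/7" for X
    using \<open>0 < R + 1\<close> by (auto simp: field_simps)
  ultimately show ?thesis
    by simp
qed

lemma crit_fun_strict_mono:
  assumes "0 < s" "s < t"
  shows "crit_fun s < crit_fun t"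
proof -
  have "sqrt s * (1 + s) < sqrt t * (1 + t)"
    using assms by (intro mult_strict_mono) auto
  moreover have "dB s s \<le> dB t t"
    using assms by (intro dB_mono) auto
  moreover have "0 \<le> sqrt s * (1 + s)"
    using assms by simp
  moreover have "0 < dB s s"
    using assms unfolding dB_def by (simp add: add_pos_pos)
  ultimately show ?thesis
    unfolding crit_fun_def by (rule mult_less_le_imp_less)
qed

lemma crit_fun_continuous: "continuous_on {0..} crit_fun"
proof -
  have "1 + R + R * R \<noteq> 0" if "R \<in> {0..}" for R :: real
    using that by (smt (verit) atLeast_iff mult_nonneg_nonneg)
  then show ?thesis
    unfolding crit_fun_def dB_def by (intro continuous_intros) auto
qed

lemma Re_crit_root: "crit_fun Re_crit = 10/7 \<and> Re_crit < 149/100"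
proof -
  have "crit_fun 1 < 10/7"
    by (simp add: crit_fun_def dB_def)
  moreover have below: "10/7 < crit_fun (149/100)"
  proof -
    have "1218/1000 < sqrt (149/100)"
      by (rule real_less_rsqrt) (simp add: power2_eq_square)
    then show ?thesis
      by (simp add: crit_fun_def dB_def)
  qed
  ultimately obtain R where R: "1 \<le> R" "R \<le> 149/100" "crit_fun R = 10/7"
    using IVT'[of crit_fun 1 "10/7" "149/100"] continuous_on_subset[OF crit_fun_continuous]
    by fastforce
  have "Re_crit = R"
    unfolding Re_crit_def
  proof (rule the_equality)
    fix R' assume "0 < R' \<and> 10 / (7 * (R' + 1)) - R'^2 * sqrt R' / (R'^2 + R' + 1) = 0"
    then have "0 < R'" "crit_fun R' = crit_fun R"
      using R Re_crit_equation_iff by auto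
    then show "R' = R"
      using crit_fun_strict_mono[of R' R] crit_fun_strict_mono[of R R'] R
      by (cases R' R rule: linorder_cases) auto
  qed (use R Re_crit_equation_iff in auto)
  moreover have "R \<noteq> 149/100"
    using R(3) below by (metis less_irrefl)
  ultimately show ?thesis
    using R by auto
qed

lemma crit_fun_less:
  assumes "0 < R" "R < Re_crit"
  shows "crit_fun R < 10/7"
  using crit_fun_strict_mono[OF assms] Re_crit_root by simp

lemma qfun_nonneg:
  assumes "0 < x" "x < Re_crit" "0 < y" "y < Re_crit" "0 \<le> z" "sqrt z \<le> 10/7"
  shows "0 \<le> qfun x y z"
proof -
  define m where "m = max x y"
  have m: "0 < m" "m < Re_crit" "x \<le> m" "y \<le> m"
    using assms unfolding m_def by auto
  have "sqrt x * (1 + x) * dB x y \<le> crit_fun m"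
    unfolding crit_fun_def using assms m
    by (intro mult_mono dB_mono) (auto simp: dB_nonneg)
  also have "\<dots> < 10/7"
    using crit_fun_less m by simp
  finally have "sqrt x * (1 + x) * dB x y \<le> 10/7"
    by simp
  then have "sqrt y * dA y * (sqrt x * (1 + x) * dB x y) \<le> sqrt y * dA y * (10/7)"
    using assms by (intro mult_left_mono) (auto simp: dA_nonneg)
  moreover have "sqrt (x * y) * d2 x y = sqrt y * dA y * (sqrt x * (1 + x) * dB x y)"
    by (simp add: d2_eq real_sqrt_mult mult_ac)
  moreover have "10/7 * sqrt y * dA y \<le> dstar y z"
    using assms by (intro dstar_ge) auto
  ultimately show ?thesis
    unfolding qfun_def by simp
qed

lemma pfun_eq:
  assumes "0 \<le> y" "0 \<le> z"
  shows "pfun x y z = 2 + (dA y + dB y z) * (2 - 7/10 * sqrt y)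
    - d2 y z * (7/10 * sqrt y + 51/100 * sqrt y * sqrt z) - dstar x y"
  unfolding pfun_def dstar_def[of y z] using assms
  by (simp add: d0_eq d1_eq real_sqrt_mult field_simps)

(* Boxes are taken in the coordinates sqrt x <= s, sqrt y in [b0, b1], sqrt z in [c0, c1];
   each term of pfun_eq is monotone there and is evaluated at its worst corner. *)
definition p_lower :: "real \<Rightarrow> real \<Rightarrow> real \<Rightarrow> real \<Rightarrow> real \<Rightarrow> real" where
  "p_lower s b0 b1 c0 c1 = 2 + (dA (b0^2) + dB (b0^2) (c0^2)) * (2 - 7/10 * b1)
    - d2 (b1^2) (c1^2) * (7/10 * b1 + 51/100 * b1 * c1)
    - s * (10/7 * (dA (s^2) + dB (s^2) (b1^2)) + d2 (s^2) (b1^2) * (10/7 - b0))"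

lemma p_lower_le:
  assumes x: "0 < x" "sqrt x \<le> s"
    and y: "0 < y" "b0 \<le> sqrt y" "sqrt y \<le> b1"
    and z: "0 < z" "c0 \<le> sqrt z" "sqrt z \<le> c1"
    and "0 \<le> b0" "b1 \<le> 10/7" "0 \<le> c0"
  shows "p_lower s b0 b1 c0 c1 \<le> pfun x y z"
proof -
  have sq: "x \<le> s^2" "y \<le> b1^2" "z \<le> c1^2" "b0^2 \<le> y" "c0^2 \<le> z"
    using x y z power_mono[OF y(2) \<open>0 \<le> b0\<close>, of 2] power_mono[OF z(2) \<open>0 \<le> c0\<close>, of 2]
    by (auto intro: sqrt_le_D)
  have "0 \<le> s"
    using x by (meson less_imp_le order_trans real_sqrt_ge_zero)
  have "(dA (b0^2) + dB (b0^2) (c0^2)) * (2 - 7/10 * b1) \<le> (dA y + dB y z) * (2 - 7/10 * sqrt y)"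
    using assms sq by (intro mult_mono add_mono dA_mono dB_mono) (auto simp: dA_nonneg dB_nonneg)
  moreover have "d2 y z * (7/10 * sqrt y + 51/100 * sqrt y * sqrt z)
      \<le> d2 (b1^2) (c1^2) * (7/10 * b1 + 51/100 * b1 * c1)"
    using assms sq by (intro mult_mono add_mono d2_mono) (auto simp: d2_nonneg)
  moreover have "dstar x y \<le> s * (10/7 * (dA (s^2) + dB (s^2) (b1^2)) + d2 (s^2) (b1^2) * (10/7 - b0))"
    unfolding dstar_eq[OF less_imp_le less_imp_le, OF x(1) y(1)] using assms sq \<open>0 \<le> s\<close>
    by (intro mult_mono add_mono d2_mono dA_mono dB_mono)
      (auto simp: dA_nonneg dB_nonneg d2_nonneg)
  ultimately show ?thesis
    unfolding p_lower_def pfun_eq[OF less_imp_le less_imp_le, OF y(1) z(1)] by linarith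
qed

(* Written with if rather than a disjunction: simp rewrites only the condition of an if
   (if_weak_cong), so the subboxes are evaluated only where the bound fails. *)
fun p_certified :: "nat \<Rightarrow> real \<Rightarrow> real \<Rightarrow> real \<Rightarrow> real \<Rightarrow> real \<Rightarrow> bool" where
  "p_certified 0 s b0 b1 c0 c1 \<longleftrightarrow> 1/50 \<le> p_lower s b0 b1 c0 c1"
| "p_certified (Suc k) s b0 b1 c0 c1 \<longleftrightarrow>
    (if 1/50 \<le> p_lower s b0 b1 c0 c1 then True
     else let bm = (b0 + b1) / 2; cm = (c0 + c1) / 2 in
       p_certified k s b0 bm c0 cm \<and> p_certified k s bm b1 c0 cm \<and>
       p_certified k s b0 bm cm c1 \<and> p_certified k s bm b1 cm c1)"

lemma p_certified_sound:
  assumes "p_certified k s b0 b1 c0 c1"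
    and "0 < x" "sqrt x \<le> s"
    and "0 < y" "b0 \<le> sqrt y" "sqrt y \<le> b1"
    and "0 < z" "c0 \<le> sqrt z" "sqrt z \<le> c1"
    and "0 \<le> b0" "b1 \<le> 10/7" "0 \<le> c0"
  shows "1/50 \<le> pfun x y z"
  using assms
proof (induction k arbitrary: b0 b1 c0 c1)
  case 0
  then show ?case
    using p_lower_le[of x s y b0 b1 z c0 c1] by simp
next
  case (Suc k)
  show ?case
  proof (cases "1/50 \<le> p_lower s b0 b1 c0 c1")
    case True
    then show ?thesis
      using Suc.prems p_lower_le[of x s y b0 b1 z c0 c1] by simp
  next
    case False
    define bm where "bm = (b0 + b1) / 2"
    define cm where "cm = (c0 + c1) / 2"
    have "p_certified k s b0 bm c0 cm" "p_certified k s bm b1 c0 cm"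
      "p_certified k s b0 bm cm c1" "p_certified k s bm b1 cm c1"
      using Suc.prems(1) False unfolding bm_def cm_def by (simp_all add: Let_def)
    moreover have "0 \<le> bm" "bm \<le> 10/7" "0 \<le> cm"
      using Suc.prems by (auto simp: bm_def cm_def)
    ultimately show ?thesis
      using Suc.IH[of b0 bm c0 cm] Suc.IH[of bm b1 c0 cm] Suc.IH[of b0 bm cm c1] Suc.IH[of bm b1 cm c1]
        Suc.prems by (cases "sqrt y \<le> bm"; cases "sqrt z \<le> cm") auto
  qed
qed

(* 11/9 >= sqrt (149/100) is chosen for its small denominator, which keeps the numerals
   in the evaluation small. *)
lemma p_certified_root_box: "p_certified 8 (11/9) 0 (11/9) 0 (11/9)"
  by (simp add: numeral_eq_Suc Let_def p_lower_def dA_def dB_def d2_eq power2_eq_square)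

lemma sqrt_le_11_9: "x < Re_crit \<Longrightarrow> sqrt x \<le> 11/9"
  using Re_crit_root by (intro real_le_lsqrt) (auto simp: power2_eq_square)

lemma pfun_ge:
  assumes "0 < x" "x < Re_crit" "0 < y" "y < Re_crit" "0 < z" "z < Re_crit"
  shows "1/50 \<le> pfun x y z"
  using p_certified_sound[OF p_certified_root_box] assms sqrt_le_11_9 by simp

lemma energy_identity:
  assumes "1 \<le> n" "0 < tau n" "0 < tau (n-1)" "0 < tau (n-2)"
  shows "2 * v0 * tau n * (d0 (ratio tau n) (ratio tau (n-1)) * v0
            + d1 (ratio tau n) (ratio tau (n-1)) * v1
            + d2 (ratio tau n) (ratio tau (n-1)) * v2)
         = Gfun tau n v0 v1 - Gfun tau (n-1) v1 v2 + Ffun tau n v0 v1 v2"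
proof -
  \<comment> \<open>In terms of sb, sc and t all square roots disappear and the identity becomes rational.\<close>
  define b c where "b = ratio tau n" and "c = ratio tau (n-1)"
  define sb sc t where "sb = sqrt b" and "sc = sqrt c" and "t = sqrt (tau (n-2))"
  have "n - 1 - 1 = n - 2" "n - 1 + 1 = n"
    using assms(1) by auto
  then have tau: "tau (n-1) = c * tau (n-2)" "tau n = b * tau (n-1)"
    using assms unfolding b_def c_def ratio_def by auto
  have "0 < b" "0 < c"
    using assms unfolding b_def c_def ratio_def \<open>n - 1 - 1 = n - 2\<close> by auto
  then have sqrts: "sqrt (tau n) = sb * sc * t" "sqrt (tau (n-1)) = sc * t" "sqrt (tau (n-2)) = t"
      "sqrt b = sb" "sqrt (b * c) = sb * sc"
    unfolding sb_def sc_def t_def tau by (simp_all add: real_sqrt_mult)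
  have squares: "tau n = sb^2 * sc^2 * t^2" "tau (n-1) = sc^2 * t^2" "tau (n-2) = t^2"
    using \<open>0 < b\<close> \<open>0 < c\<close> assms(4) unfolding sb_def sc_def t_def tau by simp_all
  show ?thesis
    unfolding Gfun_def Ffun_def pfun_def qfun_def dstar_def[of b c]
      b_def[symmetric] c_def[symmetric] \<open>n - 1 + 1 = n\<close> \<open>n - 1 - 1 = n - 2\<close> sqrts
    unfolding squares by (simp add: field_simps power2_eq_square)
qed

lemma Gfun_nonneg:
  assumes "0 < ratio tau (n+1)" "0 < ratio tau n" "sqrt (ratio tau n) \<le> 10/7" "0 \<le> tau n"
  shows "0 \<le> Gfun tau n a b"
  unfolding Gfun_def using assms by (simp add: dstar_nonneg d2_nonneg)

lemma Ffun_ge: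
  assumes "0 < ratio tau (n+1)" "ratio tau (n+1) < Re_crit"
    and "0 < ratio tau n" "ratio tau n < Re_crit"
    and "0 < ratio tau (n-1)" "ratio tau (n-1) < Re_crit"
    and "0 \<le> tau n"
  shows "tau n / 50 * a^2 \<le> Ffun tau n a b c"
proof -
  let ?p = "pfun (ratio tau (n+1)) (ratio tau n) (ratio tau (n-1))"
  let ?q = "qfun (ratio tau (n+1)) (ratio tau n) (ratio tau (n-1))"
  let ?d = "sqrt (ratio tau n * ratio tau (n-1)) * d2 (ratio tau n) (ratio tau (n-1))"
  have "1/50 * (tau n * a^2) \<le> ?p * (tau n * a^2)"
    using pfun_ge[OF assms(1-6)] assms(7) by (intro mult_right_mono) auto
  moreover have "0 \<le> ?q"
    using assms sqrt_le_11_9[of "ratio tau (n-1)"] by (intro qfun_nonneg) auto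
  moreover have "0 \<le> ?d"
    using assms by (simp add: d2_nonneg)
  ultimately have "1/50 * (tau n * a^2) \<le> ?p * (tau n * a^2) + ?q * X^2 + ?d * Y^2" for X Y
    by (simp add: add_increasing2)
  then show ?thesis
    unfolding Ffun_def by (simp add: mult.assoc)
qed

theorem lemma3p1:
  fixes tau :: "nat \<Rightarrow> real" and n :: nat and vn vn1 vn2 :: real
  assumes tau_pos: "\<And>k. k \<ge> 1 \<Longrightarrow> tau k > 0"
    and ratio_bd: "\<And>k. k \<ge> 2 \<Longrightarrow> 0 < ratio tau k \<and> ratio tau k < Re_crit"
    and n3: "n \<ge> 3"
  shows "2 * vn * tau n * (d0 (ratio tau n) (ratio tau (n-1)) * vn
            + d1 (ratio tau n) (ratio tau (n-1)) * vn1
            + d2 (ratio tau n) (ratio tau (n-1)) * vn2)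
           = Gfun tau n vn vn1 - Gfun tau (n-1) vn1 vn2 + Ffun tau n vn vn1 vn2
      \<and> Gfun tau n vn vn1 \<ge> 0
      \<and> Gfun tau (n-1) vn1 vn2 \<ge> 0
      \<and> Ffun tau n vn vn1 vn2 \<ge> 0
      \<and> Ffun tau n vn vn1 vn2 \<ge> tau n / 50 * vn^2"
proof -
  have tau: "0 < tau n" "0 < tau (n-1)" "0 < tau (n-2)"
    using tau_pos n3 by auto
  have ratios: "0 < ratio tau k" "ratio tau k < Re_crit" "sqrt (ratio tau k) \<le> 10/7"
    if "k \<in> {n-1, n, n+1}" for k
    using that ratio_bd[of k] n3 sqrt_le_11_9[of "ratio tau k"] by auto
  have "tau n / 50 * vn^2 \<le> Ffun tau n vn vn1 vn2"
    using ratios tau by (intro Ffun_ge) auto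
  moreover have "0 \<le> tau n / 50 * vn^2"
    using tau by simp
  moreover have "0 \<le> Gfun tau n vn vn1" "0 \<le> Gfun tau (n-1) vn1 vn2"
    using ratios tau n3 by (intro Gfun_nonneg; simp)+
  moreover have "2 * vn * tau n * (d0 (ratio tau n) (ratio tau (n-1)) * vn
            + d1 (ratio tau n) (ratio tau (n-1)) * vn1
            + d2 (ratio tau n) (ratio tau (n-1)) * vn2)
           = Gfun tau n vn vn1 - Gfun tau (n-1) vn1 vn2 + Ffun tau n vn vn1 vn2"
    using n3 tau by (intro energy_identity) auto
  ultimately show ?thesis
    by linarith
qed

end
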